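(* Let $f\colon V_0\to\mathbb{R}$ be continuous such that $\Gamma_f$ is a ruled surface. Let $R_1,R_2$ be distinct rulings of $\Gamma_f$ with $w_z(R_1)<w_z(R_2)$. Then $g_{R_1}(x)\le g_{R_2}(x)$ for all $x\in\mathbb{R}$ and $m(R_1)\ge m(R_2)$.
   Context: $\mathbb{H}$ is $\mathbb{R}^3$ with product $(x,y,z)\cdot(x',y',z')=(x+x',y+y',z+z'+\frac{xy'-yx'}{2})$; $X=(1,0,0)$, $Y=(0,1,0)$, $v^t=tv$. A horizontal line is $\{p\cdot tv\}$ with $v=(a,b,0)\ne0$, slope $b/a$; a ruled surface is a union of horizontal line segments (rulings) with endpoints in its boundary; since $\Gamma_f$ is entire, its rulings are horizontal lines, each of the form $\{w\cdot(X+mY)^t:t\in\mathbb{R}\}$. $V_0=\{(x,0,z)\}$, $\Gamma_f=\{u\cdot Y^{f(u)}:u\in V_0\}$, $\Pi(x,y,z)=(x,0,z-\frac{xy}2)$. For a ruling $R$: $m(R)$ is its slope, $w(R)=(0,w_y(R),w_z(R))$ is its intersection with the $yz$-plane, and $g_R(x)=w_z(R)-w_y(R)x-\frac{m(R)}2x^2$, so that $\Pi(R)=\{(x,0,g_R(x)):x\in\mathbb{R}\}$. *)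

theory Defs
  imports "HOL-Analysis.Analysis"
begin

type_synonym heis = "real \<times> real \<times> real"

definition hmul :: "heis \<Rightarrow> heis \<Rightarrow> heis" where
  "hmul p q = (case p of (x, y, z) \<Rightarrow> case q of (x', y', z') \<Rightarrow>
     (x + x', y + y', z + z' + (x * y' - y * x') / 2))"

definition hpow :: "heis \<Rightarrow> real \<Rightarrow> heis" where
  "hpow v t = (case v of (a, b, c) \<Rightarrow> (t * a, t * b, t * c))"

definition horizontal_line :: "heis set \<Rightarrow> bool" where
  "horizontal_line L \<longleftrightarrow> (\<exists>p a b. (a, b) \<noteq> (0, 0) \<and>
     L = {hmul p (hpow (a, b, 0) t) | t. True})"

text \<open>Intrinsic graph of f : V_0 \<rightarrow> R, where V_0 = {(x,0,z)} is identified with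
  pairs (x,z).\<close>
definition intrinsic_graph :: "(real \<times> real \<Rightarrow> real) \<Rightarrow> heis set" where
  "intrinsic_graph f = {hmul (x, 0, z) (hpow (0, 1, 0) (f (x, z))) | x z. True}"

text \<open>A ruling decomposition: a family of horizontal lines whose union is the surface
  (since the graph is entire, rulings are full horizontal lines).\<close>
definition ruling_family :: "heis set set \<Rightarrow> heis set \<Rightarrow> bool" where
  "ruling_family \<R> S \<longleftrightarrow> (\<forall>R\<in>\<R>. horizontal_line R) \<and> \<Union>\<R> = S"

definition ruled_surface :: "heis set \<Rightarrow> bool" where
  "ruled_surface S \<longleftrightarrow> (\<exists>\<R>. ruling_family \<R> S)"

definition slope :: "heis set \<Rightarrow> real" where
  "slope R = (THE m. \<exists>p. R = {hmul p (hpow (1, m, 0) t) | t. True})"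

definition wpt :: "heis set \<Rightarrow> heis" where
  "wpt R = (THE w. w \<in> R \<and> fst w = 0)"

definition w_y :: "heis set \<Rightarrow> real" where
  "w_y R = fst (snd (wpt R))"

definition w_z :: "heis set \<Rightarrow> real" where
  "w_z R = snd (snd (wpt R))"

definition g_R :: "heis set \<Rightarrow> real \<Rightarrow> real" where
  "g_R R x = w_z R - w_y R * x - slope R / 2 * x\<^sup>2"

end

theory Submission
  imports Defs
begin

text \<open>A ruling R of an entire intrinsic graph cannot be vertical, so it is the line through
  w(R) = (0, b, c) with direction X + m Y. Its projection \<Pi>(R) is the parabola z = g(x) with
  g(x) = c - b x - (m/2) x^2, and the y-coordinate of R over x is b + m x = -g'(x); since R lies
  in the graph, f(x, g(x)) = -g'(x). Hence wherever the parabolas of two rulings meet, f forces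
  them to be tangent. So g_R1 - g_R2 is a quadratic polynomial that is negative at 0
  and has no simple roots: it is nonpositive everywhere, with nonpositive leading coefficient
  -(m(R1) - m(R2))/2.\<close>

definition hline :: "real \<Rightarrow> real \<Rightarrow> real \<Rightarrow> heis set" where
  "hline b c m = {hmul (0, b, c) (hpow (1, m, 0) s) | s. True}"

lemma hline_eq: "hline b c m = range (\<lambda>s. (s, b + m * s, c - b * s / 2))"
  by (auto simp: hline_def hmul_def hpow_def)

lemma mem_hline_iff: "(x, y, z) \<in> hline b c m \<longleftrightarrow> y = b + m * x \<and> z = c - b * x / 2"
  by (auto simp: hline_eq)

lemma mem_intrinsic_graph_iff:
  "(x, y, z) \<in> intrinsic_graph f \<longleftrightarrow> y = f (x, z - x * y / 2)"
  by (force simp: intrinsic_graph_def hmul_def hpow_def)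

lemma hline_subset_intrinsic_graph_iff:
  "hline b c m \<subseteq> intrinsic_graph f \<longleftrightarrow> (\<forall>s. f (s, c - b * s - m / 2 * s\<^sup>2) = b + m * s)"
proof -
  have parabola: "c - b * s / 2 - s * (b + m * s) / 2 = c - b * s - m / 2 * s\<^sup>2" for s
    by (simp add: algebra_simps power2_eq_square)
  have "(s, b + m * s, c - b * s / 2) \<in> intrinsic_graph f \<longleftrightarrow>
      f (s, c - b * s - m / 2 * s\<^sup>2) = b + m * s" for s
    unfolding mem_intrinsic_graph_iff parabola by auto
  then show ?thesis
    by (auto simp: hline_eq)
qed

lemma nonvertical_line_eq_hline:
  assumes "a \<noteq> 0"
  shows "{hmul (px, py, pz) (hpow (a, a', 0) t) | t. True} =
    hline (py - a' / a * px) (pz + (py - a' / a * px) * px / 2) (a' / a)"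
    (is "?L = hline ?b ?c ?m")
proof (intro set_eqI iffI)
  fix q assume "q \<in> ?L"
  then obtain t where "q = hmul (px, py, pz) (hpow (a, a', 0) t)" by blast
  then have "q = (px + t * a, ?b + ?m * (px + t * a), ?c - ?b * (px + t * a) / 2)"
    using assms by (simp add: hmul_def hpow_def field_simps)
  then show "q \<in> hline ?b ?c ?m" by (auto simp: hline_eq)
next
  fix q assume "q \<in> hline ?b ?c ?m"
  then obtain s where "q = (s, ?b + ?m * s, ?c - ?b * s / 2)" by (auto simp: hline_eq)
  then have "q = hmul (px, py, pz) (hpow (a, a', 0) ((s - px) / a))"
    using assms by (simp add: hmul_def hpow_def field_simps)
  then show "q \<in> ?L" by blast
qed

lemma horizontal_line_in_intrinsic_graph:
  assumes "horizontal_line R" and "R \<subseteq> intrinsic_graph f"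
  obtains b c m where "R = hline b c m"
proof -
  obtain p a a' where dir: "(a, a') \<noteq> (0, 0)"
    and R_p: "R = {hmul p (hpow (a, a', 0) t) | t. True}"
    using assms(1) unfolding horizontal_line_def by blast
  obtain px py pz where "p = (px, py, pz)"
    by (cases p)
  with R_p have R: "R = {hmul (px, py, pz) (hpow (a, a', 0) t) | t. True}"
    by simp
  have "a \<noteq> 0"
  proof
    assume "a = 0"
    \<comment> \<open>a vertical line meets the graph twice over the same point of V_0\<close>
    have "hmul (px, py, pz) (hpow (a, a', 0) t) \<in> intrinsic_graph f" for t
      using assms(2) R by blast
    moreover have "hmul (px, py, pz) (hpow (a, a', 0) t) = (px, py + t * a', pz + px * t * a' / 2)"
      for t using \<open>a = 0\<close> by (simp add: hmul_def hpow_def)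
    ultimately have "py + t * a' = f (px, pz + px * t * a' / 2 - px * (py + t * a') / 2)" for t
      by (metis mem_intrinsic_graph_iff)
    moreover have "pz + px * t * a' / 2 - px * (py + t * a') / 2 = pz - px * py / 2" for t
      by (simp add: algebra_simps)
    ultimately have "py + t * a' = f (px, pz - px * py / 2)" for t
      by metis
    from this[of 0] this[of 1] have "a' = 0" by simp
    with \<open>a = 0\<close> dir show False by simp
  qed
  with R nonvertical_line_eq_hline that show ?thesis by blast
qed

lemma slope_hline: "slope (hline b c m) = m"
  unfolding slope_def
proof (rule the_equality)
  show "\<exists>p. hline b c m = {hmul p (hpow (1, m, 0) t) | t. True}"
    unfolding hline_def by blast
next
  fix m' assume "\<exists>p. hline b c m = {hmul p (hpow (1, m', 0) t) | t. True}"
  then obtain px py pz where "hline b c m = {hmul (px, py, pz) (hpow (1, m', 0) t) | t. True}"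
    by auto
  then have same_line: "hline b c m = hline (py - m' * px) (pz + (py - m' * px) * px / 2) m'"
    using nonvertical_line_eq_hline[of 1 px py pz m'] by simp
  have "(s, b + m * s, c - b * s / 2) \<in> hline b c m" for s
    by (simp add: mem_hline_iff)
  then have "b + m * s = py - m' * px + m' * s" for s
    unfolding same_line mem_hline_iff by simp
  from this[of 0] this[of 1] show "m' = m" by simp
qed

lemma wpt_hline: "wpt (hline b c m) = (0, b, c)"
  unfolding wpt_def by (rule the_equality) (auto simp: hline_eq)

lemma g_R_hline: "g_R (hline b c m) x = c - b * x - m / 2 * x\<^sup>2"
  by (simp add: g_R_def w_y_def w_z_def wpt_hline slope_hline)

lemma quadratic_nonpos_without_simple_roots:
  fixes C B M :: real
  assumes "C < 0"
    and double_roots: "\<And>s. C - B * s - M / 2 * s\<^sup>2 = 0 \<Longrightarrow> B + M * s = 0"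
  shows "(\<forall>s. C - B * s - M / 2 * s\<^sup>2 \<le> 0) \<and> M \<ge> 0"
proof (cases "M = 0")
  case True
  have "B = 0"
  proof (rule ccontr)
    assume "B \<noteq> 0"
    with True double_roots[of "C / B"] show False by simp
  qed
  with True \<open>C < 0\<close> show ?thesis by simp
next
  case False
  define s0 where "s0 = - B / M"
  define D where "D = C + B\<^sup>2 / (2 * M)"
  have vertex_form: "C - B * s - M / 2 * s\<^sup>2 = D - M / 2 * (s - s0)\<^sup>2" for s
    using False by (simp add: D_def s0_def field_simps power2_eq_square)
  have "\<not> D / M > 0"
  proof
    assume "D / M > 0"
    define s1 where "s1 = s0 + sqrt (2 * D / M)"
    have "(sqrt (2 * D / M))\<^sup>2 = 2 * D / M"
      using \<open>D / M > 0\<close> by simp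
    then have "C - B * s1 - M / 2 * s1\<^sup>2 = 0"
      unfolding vertex_form s1_def using False by (simp add: field_simps)
    then have "B + M * s1 = 0"
      by (rule double_roots)
    moreover have "B + M * s1 = M * sqrt (2 * D / M)"
      using False by (simp add: s1_def s0_def field_simps)
    ultimately have "M * sqrt (2 * D / M) = 0"
      by simp
    with False \<open>D / M > 0\<close> show False by simp
  qed
  moreover have "M < 0 \<Longrightarrow> D < 0"
    using \<open>C < 0\<close> by (simp add: D_def divide_nonneg_neg add_neg_nonpos)
  ultimately have "M > 0"
    using False divide_neg_neg by (metis linorder_neqE_linordered_idom)
  with \<open>\<not> D / M > 0\<close> have "D \<le> 0"
    by (meson divide_pos_pos not_le)
  have "M / 2 * (s - s0)\<^sup>2 \<ge> 0" for s
    using \<open>M > 0\<close> by simp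
  then have "D - M / 2 * (s - s0)\<^sup>2 \<le> 0" for s
    using \<open>D \<le> 0\<close> by (meson diff_le_0_iff_le order_trans)
  with \<open>M > 0\<close> show ?thesis
    unfolding vertex_form by (blast intro: less_imp_le)
qed

lemma rulings_of_intrinsic_graph_ordered:
  assumes "hline b1 c1 m1 \<subseteq> intrinsic_graph f" and "hline b2 c2 m2 \<subseteq> intrinsic_graph f"
    and "c1 < c2"
  shows "(\<forall>x. c1 - b1 * x - m1 / 2 * x\<^sup>2 \<le> c2 - b2 * x - m2 / 2 * x\<^sup>2) \<and> m2 \<le> m1"
proof -
  have "(b1 - b2) + (m1 - m2) * s = 0"
    if "(c1 - c2) - (b1 - b2) * s - (m1 - m2) / 2 * s\<^sup>2 = 0" for s
  proof -
    have meet: "c1 - b1 * s - m1 / 2 * s\<^sup>2 = c2 - b2 * s - m2 / 2 * s\<^sup>2"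
      using that by (simp add: field_simps)
    have "b1 + m1 * s = f (s, c1 - b1 * s - m1 / 2 * s\<^sup>2)"
      using assms(1) unfolding hline_subset_intrinsic_graph_iff by metis
    also have "\<dots> = f (s, c2 - b2 * s - m2 / 2 * s\<^sup>2)"
      by (simp only: meet)
    also have "\<dots> = b2 + m2 * s"
      using assms(2) unfolding hline_subset_intrinsic_graph_iff by metis
    finally show ?thesis
      by (simp add: algebra_simps)
  qed
  with quadratic_nonpos_without_simple_roots[of "c1 - c2" "b1 - b2" "m1 - m2"] \<open>c1 < c2\<close>
  have "\<forall>s. (c1 - c2) - (b1 - b2) * s - (m1 - m2) / 2 * s\<^sup>2 \<le> 0" and "m1 - m2 \<ge> 0"
    by simp_all
  moreover have "(c1 - b1 * x - m1 / 2 * x\<^sup>2) - (c2 - b2 * x - m2 / 2 * x\<^sup>2) =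
      (c1 - c2) - (b1 - b2) * x - (m1 - m2) / 2 * x\<^sup>2" for x
    by (simp add: field_simps)
  ultimately show ?thesis
    by (metis diff_ge_0_iff_ge diff_le_0_iff_le)
qed

theorem lemma4p2:
  fixes f :: "real \<times> real \<Rightarrow> real" and \<R> :: "heis set set" and R1 R2 :: "heis set"
  assumes "continuous_on UNIV f"
    and "ruled_surface (intrinsic_graph f)"
    and "ruling_family \<R> (intrinsic_graph f)"
    and "R1 \<in> \<R>" and "R2 \<in> \<R>" and "R1 \<noteq> R2"
    and "w_z R1 < w_z R2"
  shows "(\<forall>x. g_R R1 x \<le> g_R R2 x) \<and> slope R1 \<ge> slope R2"
proof -
  have in_graph: "horizontal_line R" "R \<subseteq> intrinsic_graph f" if "R \<in> \<R>" for R
    using assms(3) that unfolding ruling_family_def by auto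
  obtain b1 c1 m1 where R1: "R1 = hline b1 c1 m1"
    using horizontal_line_in_intrinsic_graph in_graph[OF assms(4)] by metis
  obtain b2 c2 m2 where R2: "R2 = hline b2 c2 m2"
    using horizontal_line_in_intrinsic_graph in_graph[OF assms(5)] by metis
  have "c1 < c2"
    using assms(7) by (simp add: R1 R2 w_z_def wpt_hline)
  with in_graph(2)[OF assms(4)] in_graph(2)[OF assms(5)]
  have "(\<forall>x. c1 - b1 * x - m1 / 2 * x\<^sup>2 \<le> c2 - b2 * x - m2 / 2 * x\<^sup>2) \<and> m2 \<le> m1"
    unfolding R1 R2 by (rule rulings_of_intrinsic_graph_ordered)
  then show ?thesis
    by (simp add: R1 R2 g_R_hline slope_hline)
qed

end
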